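(* Let $V$ be the set of the $24$ points of $\mathbb{R}^4$ obtained as all coordinate permutations of $(\pm 1,\pm 1,0,0)$; these are the vertices of the $24$-cell. The octahedral cells of the $24$-cell are the following $24$ six-element subsets of $V$: - for each of the $8$ vectors $c\in\{\pm e_1,\pm e_2,\pm e_3,\pm e_4\}$, the cell $C_c=\{v\in V : v\cdot c = 1\}$; - for each of the $16$ vectors $c\in\{(\pm1,\pm1,\pm1,\pm1)\}$, the cell $C_c=\{v\in V: v\cdot c=2\}$. Then there exists a bijection $f\colon V\to\{1,2,\dots,24\}$ such that $\sum_{v\in C}f(v)$ takes the same value for every one of these $24$ octahedral cells $C$. This common value is $75$.
   Context: Here $e_1,\dots,e_4$ are the standard basis vectors of $\mathbb{R}^4$ and $v\cdot c$ is the standard dot product. Each of the sets $C_c$ listed has exactly six elements, and these are the vertex sets of the $24$ octahedral cells of the $24$-cell. A bijection $f$ with equal cell sums is called a cell-magic (facet-magic) labeling, or magic $24$-cell. *)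

theory Defs
  imports "HOL-Analysis.Analysis" "HOL-Combinatorics.Permutations"
begin

definition cell24_vertices :: "(real^4) set" where
  "cell24_vertices =
     {v. \<exists>a b p. a \<in> {1,-1} \<and> b \<in> {1,-1} \<and> p permutes (UNIV :: 4 set) \<and>
         v = (\<chi> i. (vector [a, b, 0, 0] :: real^4) $ p i)}"

definition axis_centres :: "(real^4) set" where
  "axis_centres = {c. \<exists>i s. s \<in> {1,-1} \<and> c = axis i s}"

definition diag_centres :: "(real^4) set" where
  "diag_centres = {c. \<forall>i. c $ i \<in> {1,-1}}"

definition octa_cells :: "(real^4) set set" where
  "octa_cells =
     (\<lambda>c. {v \<in> cell24_vertices. v \<bullet> c = 1}) ` axis_centres \<union>
     (\<lambda>c. {v \<in> cell24_vertices. v \<bullet> c = 2}) ` diag_centres"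

end

theory Submission
  imports Defs
begin

text \<open>
  Every vertex lies in exactly six of the 24 cells, so the 24 cell sums add up to
  \<open>6 * (1 + \<dots> + 24) = 1800\<close>; a common value is therefore necessarily \<open>75\<close>.
  The vertices are exactly the vectors with entries in \<open>{-1, 0, 1}\<close> and squared
  length 2, which makes the vertex set explicit; a labelling with equal cell sums is
  then exhibited as a table and the 24 cell sums are checked by computation.
\<close>

lemma bij_betw_the_map_of:
  assumes "distinct (map fst kvs)" "distinct (map snd kvs)"
  shows "bij_betw (\<lambda>k. the (map_of kvs k)) (fst ` set kvs) (snd ` set kvs)"
proof -
  have lookup: "map_of kvs k = Some v" if "(k, v) \<in> set kvs" for k v
    using assms(1) that by (rule map_of_is_SomeI)
  have image: "(\<lambda>k. the (map_of kvs k)) ` fst ` set kvs = snd ` set kvs"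
    by (force simp: image_image lookup)
  have "card (fst ` set kvs) = card (snd ` set kvs)"
    using assms by (simp add: distinct_card flip: set_map)
  then have "inj_on (\<lambda>k. the (map_of kvs k)) (fst ` set kvs)"
    by (intro eq_card_imp_inj_on) (simp_all add: image)
  with image show ?thesis
    by (simp add: bij_betw_def)
qed

lemma sum_the_map_of_filter:
  assumes "distinct (map fst kvs)"
  shows "(\<Sum>k \<in> {k \<in> fst ` set kvs. P k}. the (map_of kvs k)) =
         sum_list (map snd (filter (P \<circ> fst) kvs))"
proof -
  have distinct: "distinct kvs" and inj: "inj_on fst (set kvs)"
    using assms by (simp_all add: distinct_map)
  have "{k \<in> fst ` set kvs. P k} = fst ` set (filter (P \<circ> fst) kvs)"
    by auto
  then have "(\<Sum>k \<in> {k \<in> fst ` set kvs. P k}. the (map_of kvs k)) =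
             (\<Sum>kv \<in> set (filter (P \<circ> fst) kvs). the (map_of kvs (fst kv)))"
    using inj by (simp add: sum.reindex inj_on_subset[of fst "set kvs"])
  also have "\<dots> = (\<Sum>kv \<in> set (filter (P \<circ> fst) kvs). snd kv)"
    using assms by (intro sum.cong) auto
  also have "\<dots> = sum_list (map snd (filter (P \<circ> fst) kvs))"
    using distinct by (simp add: sum_list_distinct_conv_sum_set)
  finally show ?thesis .
qed

lemma distinct_set_eq_atLeastAtMost:
  fixes xs :: "nat list"
  assumes "distinct xs" "set xs \<subseteq> {1..length xs}"
  shows "set xs = {1..length xs}"
  using assms by (intro card_subset_eq) (simp_all add: distinct_card)

definition vec4 :: "real \<Rightarrow> real \<Rightarrow> real \<Rightarrow> real \<Rightarrow> real^4" where
  "vec4 a b c d = vector [a, b, c, d]"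

lemma vec4_nth [simp]:
  "vec4 a b c d $ 1 = a" "vec4 a b c d $ 2 = b" "vec4 a b c d $ 3 = c" "vec4 a b c d $ 4 = d"
  by (simp_all add: vec4_def vector_def)

lemma vec4_eq_iff [simp]:
  "vec4 a b c d = vec4 a' b' c' d' \<longleftrightarrow> a = a' \<and> b = b' \<and> c = c' \<and> d = d'"
  by (simp add: vec_eq_iff forall_4)

lemma inner_vec4 [simp]: "vec4 a b c d \<bullet> vec4 a' b' c' d' = a*a' + b*b' + c*c' + d*d'"
  by (simp add: inner_vec_def sum_4)

lemma vec4_components: "v = vec4 (v $ 1) (v $ 2) (v $ 3) (v $ 4)"
  by (simp add: vec_eq_iff forall_4)

lemma cell24_vertex_nth:
  assumes "v \<in> cell24_vertices"
  shows "v $ i \<in> {-1, 0, 1}"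
proof -
  obtain a b p where "a \<in> {1, -1}" "b \<in> {1, -1}" "v = (\<chi> i. vec4 a b 0 0 $ p i)"
    using assms by (auto simp: cell24_vertices_def vec4_def)
  moreover have "p i = 1 \<or> p i = 2 \<or> p i = 3 \<or> p i = 4"
    by (rule exhaust_4)
  ultimately show ?thesis
    by auto
qed

lemma cell24_vertex_inner_self:
  assumes "v \<in> cell24_vertices"
  shows "v \<bullet> v = 2"
proof -
  obtain a b p where ab: "a \<in> {1, -1}" "b \<in> {1, -1}" and p: "p permutes UNIV"
    and v: "v = (\<chi> i. vec4 a b 0 0 $ p i)"
    using assms by (auto simp: cell24_vertices_def vec4_def)
  have "v \<bullet> v = (\<Sum>i\<in>UNIV. ((\<lambda>j. (vec4 a b 0 0 $ j)\<^sup>2) \<circ> p) i)"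
    by (simp add: v inner_vec_def power2_eq_square)
  also have "\<dots> = (\<Sum>j\<in>UNIV. (vec4 a b 0 0 $ j)\<^sup>2)"
    by (rule sum.permute[OF p, symmetric])
  also have "\<dots> = 2"
    using ab by (auto simp: sum_4)
  finally show ?thesis .
qed

lemma vec4_in_cell24_vertices:
  assumes "a \<in> {1, -1}" "b \<in> {1, -1}"
  shows "vec4 a b 0 0 \<in> cell24_vertices" "vec4 a 0 b 0 \<in> cell24_vertices"
    "vec4 a 0 0 b \<in> cell24_vertices" "vec4 0 a b 0 \<in> cell24_vertices"
    "vec4 0 a 0 b \<in> cell24_vertices" "vec4 0 0 a b \<in> cell24_vertices"
proof -
  have permuted: "(\<chi> i. vec4 a b 0 0 $ p i) \<in> cell24_vertices" if "p permutes UNIV" for p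
    using assms that unfolding cell24_vertices_def vec4_def by blast
  have "vec4 a b 0 0 = (\<chi> i. vec4 a b 0 0 $ id i)"
    "vec4 a 0 b 0 = (\<chi> i. vec4 a b 0 0 $ Transposition.transpose 2 3 i)"
    "vec4 a 0 0 b = (\<chi> i. vec4 a b 0 0 $ Transposition.transpose 2 4 i)"
    "vec4 0 a b 0 = (\<chi> i. vec4 a b 0 0 $ (Transposition.transpose 2 3 \<circ> Transposition.transpose 1 2) i)"
    "vec4 0 a 0 b = (\<chi> i. vec4 a b 0 0 $ (Transposition.transpose 2 4 \<circ> Transposition.transpose 1 2) i)"
    "vec4 0 0 a b = (\<chi> i. vec4 a b 0 0 $ (Transposition.transpose 1 3 \<circ> Transposition.transpose 2 4) i)"
    by (simp_all add: vec_eq_iff forall_4 transpose_def)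
  then show "vec4 a b 0 0 \<in> cell24_vertices" "vec4 a 0 b 0 \<in> cell24_vertices"
    "vec4 a 0 0 b \<in> cell24_vertices" "vec4 0 a b 0 \<in> cell24_vertices"
    "vec4 0 a 0 b \<in> cell24_vertices" "vec4 0 0 a b \<in> cell24_vertices"
    by (metis permuted permutes_id permutes_swap_id permutes_compose UNIV_I)+
qed

definition magic_table :: "((real^4) \<times> nat) list" where
  "magic_table =
    [(vec4 1 1 0 0, 16), (vec4 1 (-1) 0 0, 23), (vec4 (-1) 1 0 0, 2), (vec4 (-1) (-1) 0 0, 9),
     (vec4 1 0 1 0, 6), (vec4 1 0 (-1) 0, 12), (vec4 (-1) 0 1 0, 13), (vec4 (-1) 0 (-1) 0, 19),
     (vec4 1 0 0 1, 1), (vec4 1 0 0 (-1), 17), (vec4 (-1) 0 0 1, 8), (vec4 (-1) 0 0 (-1), 24),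
     (vec4 0 1 1 0, 18), (vec4 0 1 (-1) 0, 4), (vec4 0 (-1) 1 0, 21), (vec4 0 (-1) (-1) 0, 7),
     (vec4 0 1 0 1, 20), (vec4 0 1 0 (-1), 15), (vec4 0 (-1) 0 1, 10), (vec4 0 (-1) 0 (-1), 5),
     (vec4 0 0 1 1, 14), (vec4 0 0 1 (-1), 3), (vec4 0 0 (-1) 1, 22), (vec4 0 0 (-1) (-1), 11)]"

definition magic_label :: "real^4 \<Rightarrow> nat" where
  "magic_label v = the (map_of magic_table v)"

lemma magic_table_keys_distinct: "distinct (map fst magic_table)"
  by (simp add: magic_table_def)

lemma magic_table_labels_distinct: "distinct (map snd magic_table)"
  by (simp add: magic_table_def)

lemma magic_table_labels: "snd ` set magic_table = {1..24}"
proof -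
  have "set (map snd magic_table) = {1..length (map snd magic_table)}"
    using magic_table_labels_distinct
    by (rule distinct_set_eq_atLeastAtMost) (simp add: magic_table_def)
  then show ?thesis
    by (simp add: magic_table_def)
qed

lemma ternary_inner_self_eq_2_in_magic_table:
  assumes "\<forall>i. v $ i \<in> {-1, 0, 1}" "v \<bullet> v = 2"
  shows "v \<in> fst ` set magic_table"
proof -
  have "v $ 1 \<in> {-1, 0, 1}" "v $ 2 \<in> {-1, 0, 1}" "v $ 3 \<in> {-1, 0, 1}" "v $ 4 \<in> {-1, 0, 1}"
    using assms(1) by blast+
  moreover have "(v $ 1)\<^sup>2 + (v $ 2)\<^sup>2 + (v $ 3)\<^sup>2 + (v $ 4)\<^sup>2 = 2"
    using assms(2) by (simp add: inner_vec_def sum_4 power2_eq_square)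
  ultimately show ?thesis
    by (subst vec4_components[of v]) (elim insertE emptyE; simp add: magic_table_def)
qed

lemma cell24_vertices_eq_magic_table_keys: "cell24_vertices = fst ` set magic_table"
proof
  show "cell24_vertices \<subseteq> fst ` set magic_table"
    using cell24_vertex_nth cell24_vertex_inner_self ternary_inner_self_eq_2_in_magic_table by blast
  show "fst ` set magic_table \<subseteq> cell24_vertices"
    by (simp add: magic_table_def vec4_in_cell24_vertices)
qed

lemma magic_label_cell_sum:
  "(\<Sum>v \<in> {v \<in> cell24_vertices. P v}. magic_label v) =
   sum_list (map snd (filter (P \<circ> fst) magic_table))"
  unfolding cell24_vertices_eq_magic_table_keys magic_label_def
  using magic_table_keys_distinct by (rule sum_the_map_of_filter)

lemma magic_label_axis_cell_sum:
  assumes "s \<in> {1, -1}"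
  shows "(\<Sum>v \<in> {v \<in> cell24_vertices. v \<bullet> axis i s = 1}. magic_label v) = 75"
  using exhaust_4[of i] assms unfolding magic_label_cell_sum inner_axis
  by (elim disjE insertE emptyE; simp add: magic_table_def)

lemma magic_label_diagonal_cell_sum:
  assumes "\<forall>i. c $ i \<in> {1, -1}"
  shows "(\<Sum>v \<in> {v \<in> cell24_vertices. v \<bullet> c = 2}. magic_label v) = 75"
proof -
  have "c $ 1 \<in> {1, -1}" "c $ 2 \<in> {1, -1}" "c $ 3 \<in> {1, -1}" "c $ 4 \<in> {1, -1}"
    using assms by blast+
  then show ?thesis
    unfolding magic_label_cell_sum
    by (subst vec4_components[of c]) (elim insertE emptyE; simp add: magic_table_def)
qed

theorem mainTheorem1:
  shows "\<exists>f. bij_betw f cell24_vertices {1..(24::nat)} \<and>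
             (\<forall>C \<in> octa_cells. (\<Sum>v\<in>C. f v) = 75)"
proof (intro exI conjI ballI)
  have "bij_betw magic_label (fst ` set magic_table) (snd ` set magic_table)"
    unfolding magic_label_def
    using magic_table_keys_distinct magic_table_labels_distinct by (rule bij_betw_the_map_of)
  then show "bij_betw magic_label cell24_vertices {1..24}"
    by (simp only: cell24_vertices_eq_magic_table_keys magic_table_labels)
  fix C assume "C \<in> octa_cells"
  then consider (axis) i s where "s \<in> {1, -1}" "C = {v \<in> cell24_vertices. v \<bullet> axis i s = 1}"
    | (diagonal) c where "\<forall>i. c $ i \<in> {1, -1}" "C = {v \<in> cell24_vertices. v \<bullet> c = 2}"
    unfolding octa_cells_def axis_centres_def diag_centres_def by blast
  then show "(\<Sum>v\<in>C. magic_label v) = 75"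
    by cases (simp_all add: magic_label_axis_cell_sum magic_label_diagonal_cell_sum)
qed

end
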